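(* (i) If $G_n\to G$ in $\hat{\mathcal G}_*[\bar{\mathcal Z},\mathcal Z]$, then $[G_n]\to[G]$ in $\mathcal G_*[\bar{\mathcal Z},\mathcal Z]$. (ii) If $[G_n]\to[G]$ in $\mathcal G_*[\bar{\mathcal Z},\mathcal Z]$ and $G\in\hat{\mathcal G}_*[\bar{\mathcal Z},\mathcal Z]$ is a connected representative of $[G]$, then there exist connected representatives $G_n\in\hat{\mathcal G}_*[\bar{\mathcal Z},\mathcal Z]$ of $[G_n]$, $n\in\mathbb N$, such that $G_n\to G$ in $\hat{\mathcal G}_*[\bar{\mathcal Z},\mathcal Z]$. In other words, the set-valued map $[H]\mapsto\{H'\in\hat{\mathcal G}_*[\bar{\mathcal Z},\mathcal Z]:H'\text{ is a connected representative of }[H]\}$ is lower semicontinuous.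
   Context: Let $\bar{\mathcal Z},\mathcal Z$ be Polish spaces. $\hat{\mathcal G}_*[\bar{\mathcal Z},\mathcal Z]$ is the set of all rooted, simple, locally finite (not necessarily connected) graphs $G=(V,E,o,\bar\vartheta,\vartheta)$ with vertex set $V\subseteq\mathbb N$, root $o\in V$, edge marks $\bar\vartheta\in\bar{\mathcal Z}^E$ and vertex marks $\vartheta\in\mathcal Z^V$. For subsets $S_n,S\subseteq\mathbb N$ (or of the set of pairs of naturals), $S_n\to S$ means $S=\bigcup_n\bigcap_{n'>n}S_{n'}=\bigcap_n\bigcup_{n'>n}S_{n'}$. For $v\in V$, $\mathrm{cl}_v(G)$ is $v$ together with its neighbours in $G$. Convergence in $\hat{\mathcal G}_*$: $G_n=(V_n,E_n,o_n,\bar\vartheta^n,\vartheta^n)\to G=(V,E,o,\bar\vartheta,\vartheta)$ iff (1) $V_n\to V$; (2) $E_n\to E$; (3) $o_n\to o$; (4) for every $e\in E$, $\bar\vartheta^n_e\to\bar\vartheta_e$ along those $n$ with $e\in E_n$; (5) for every $v\in V$, $\vartheta^n_v\to\vartheta_v$ along those $n$ with $v\in V_n$; (6) for every $v\in V$, $\max\mathrm{cl}_v(G_n)\to\max\mathrm{cl}_v(G)$ along those $n$ with $v\in V_n$. Isomorphism classes: two rooted marked graphs are isomorphic if there is a bijection of vertex sets preserving adjacency, root and all marks. $[G]$ denotes the isomorphism class of the connected component of the root of $G$ (with its marks); a representative of a class is a connected rooted marked graph in it. $\mathcal G_*[\bar{\mathcal Z},\mathcal Z]$ is the space of such classes with the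 local topology: $[G_n]\to[G]$ iff for every $m\in\mathbb N$ there is $n_m$ and, for $n>n_m$, rooted graph isomorphisms $\varphi_{n,m}$ from the unmarked ball $B_m(G)$ (vertices within graph distance $m$ of the root) onto $B_m(G_n)$ with $\vartheta^n_{\varphi_{n,m}(v)}\to\vartheta_v$ and $\bar\vartheta^n_{\varphi_{n,m}(e)}\to\bar\vartheta_e$ for all vertices $v$ and edges $e$ of $B_m(G)$. *)

theory Defs
  imports "HOL-Analysis.Analysis"
begin

text \<open>Edges are stored as ordered pairs of a symmetric irreflexive relation; the
  undirected edge {u,v} corresponds to both (u,v) and (v,u), and its mark is
  required to be the same on both orientations.  Marks outside V resp. E are
  irrelevant junk.\<close>

record ('e, 'v) mgraph =
  verts :: "nat set"
  edges :: "(nat \<times> nat) set"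
  root  :: nat
  emark :: "nat \<times> nat \<Rightarrow> 'e"
  vmark :: "nat \<Rightarrow> 'v"

definition wf_graph :: "('e, 'v) mgraph \<Rightarrow> bool" where
  "wf_graph G \<longleftrightarrow>
     root G \<in> verts G \<and>
     edges G \<subseteq> verts G \<times> verts G \<and>
     (\<forall>u v. (u, v) \<in> edges G \<longrightarrow> (v, u) \<in> edges G) \<and>
     (\<forall>v. (v, v) \<notin> edges G) \<and>
     (\<forall>v \<in> verts G. finite {u. (v, u) \<in> edges G}) \<and>
     (\<forall>u v. (u, v) \<in> edges G \<longrightarrow> emark G (u, v) = emark G (v, u))"

definition set_conv :: "(nat \<Rightarrow> 'a set) \<Rightarrow> 'a set \<Rightarrow> bool" where
  "set_conv S L \<longleftrightarrow>
     L = (\<Union>n. \<Inter>n'\<in>{n<..}. S n') \<and> L = (\<Inter>n. \<Union>n'\<in>{n<..}. S n')"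

definition cl :: "('e, 'v) mgraph \<Rightarrow> nat \<Rightarrow> nat set" where
  "cl G v = insert v {u. (v, u) \<in> edges G}"

definition hat_conv :: "(nat \<Rightarrow> ('e::topological_space, 'v::topological_space) mgraph)
                          \<Rightarrow> ('e, 'v) mgraph \<Rightarrow> bool" where
  "hat_conv Gs G \<longleftrightarrow>
     set_conv (\<lambda>n. verts (Gs n)) (verts G) \<and>
     set_conv (\<lambda>n. edges (Gs n)) (edges G) \<and>
     (\<lambda>n. root (Gs n)) \<longlonglongrightarrow> root G \<and>
     (\<forall>e \<in> edges G. ((\<lambda>n. emark (Gs n) e) \<longlongrightarrow> emark G e)
                        (inf sequentially (principal {n. e \<in> edges (Gs n)}))) \<and>
     (\<forall>v \<in> verts G. ((\<lambda>n. vmark (Gs n) v) \<longlongrightarrow> vmark G v)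
                        (inf sequentially (principal {n. v \<in> verts (Gs n)}))) \<and>
     (\<forall>v \<in> verts G. ((\<lambda>n. Max (cl (Gs n) v)) \<longlongrightarrow> Max (cl G v))
                        (inf sequentially (principal {n. v \<in> verts (Gs n)})))"

fun ballV :: "('e, 'v) mgraph \<Rightarrow> nat \<Rightarrow> nat set" where
  "ballV G 0 = {root G}"
| "ballV G (Suc m) = ballV G m \<union> {v. \<exists>u \<in> ballV G m. (u, v) \<in> edges G}"

definition compV :: "('e, 'v) mgraph \<Rightarrow> nat set" where
  "compV G = (\<Union>m. ballV G m)"

definition root_comp :: "('e, 'v) mgraph \<Rightarrow> ('e, 'v) mgraph" where
  "root_comp G = G\<lparr>verts := compV G, edges := edges G \<inter> (compV G \<times> compV G)\<rparr>"

definition connected_graph :: "('e, 'v) mgraph \<Rightarrow> bool" where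
  "connected_graph G \<longleftrightarrow> verts G = compV G"

definition mg_iso :: "('e, 'v) mgraph \<Rightarrow> ('e, 'v) mgraph \<Rightarrow> bool" where
  "mg_iso G H \<longleftrightarrow> (\<exists>\<phi>. bij_betw \<phi> (verts G) (verts H) \<and>
     \<phi> (root G) = root H \<and>
     (\<forall>u \<in> verts G. \<forall>v \<in> verts G. (u, v) \<in> edges G \<longleftrightarrow> (\<phi> u, \<phi> v) \<in> edges H) \<and>
     (\<forall>v \<in> verts G. vmark H (\<phi> v) = vmark G v) \<and>
     (\<forall>u v. (u, v) \<in> edges G \<longrightarrow> emark H (\<phi> u, \<phi> v) = emark G (u, v)))"

definition ball_iso :: "nat \<Rightarrow> (nat \<Rightarrow> nat) \<Rightarrow> ('e, 'v) mgraph \<Rightarrow> ('e, 'v) mgraph \<Rightarrow> bool" where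
  "ball_iso m \<phi> G H \<longleftrightarrow> bij_betw \<phi> (ballV G m) (ballV H m) \<and>
     \<phi> (root G) = root H \<and>
     (\<forall>u \<in> ballV G m. \<forall>v \<in> ballV G m. (u, v) \<in> edges G \<longleftrightarrow> (\<phi> u, \<phi> v) \<in> edges H)"

text \<open>Local convergence [G_n] \<rightarrow> [G] in \<open>\<G>_*\<close>, expressed on representatives.\<close>
definition local_conv :: "(nat \<Rightarrow> ('e::topological_space, 'v::topological_space) mgraph)
                            \<Rightarrow> ('e, 'v) mgraph \<Rightarrow> bool" where
  "local_conv Gs G \<longleftrightarrow>
     (\<forall>m. \<exists>N \<phi>. (\<forall>n > N. ball_iso m (\<phi> n) G (Gs n)) \<and>
        (\<forall>v \<in> ballV G m. (\<lambda>n. vmark (Gs n) (\<phi> n v)) \<longlonglongrightarrow> vmark G v) \<and>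
        (\<forall>u \<in> ballV G m. \<forall>v \<in> ballV G m. (u, v) \<in> edges G \<longrightarrow>
            (\<lambda>n. emark (Gs n) (\<phi> n u, \<phi> n v)) \<longlonglongrightarrow> emark G (u, v)))"

end

theory Submission
  imports Defs
begin

text \<open>For well-formed graphs, convergence in \<open>\<hat>\<G>_*\<close> says that vertex sets, neighbourhoods
  and roots eventually agree with the limit while the marks converge. Hence every ball around the
  root is eventually literally the same, and the identity witnesses local convergence of the root
  components.

  Conversely, local convergence is first transported to the given representative \<open>G\<close>. A diagonal
  argument yields radii \<open>r n \<rightarrow> \<infinity>\<close> such that the \<open>r n\<close>-ball of \<open>H\<^sub>n\<close> is eventually
  isomorphic to that of \<open>G\<close> with marks \<open>1/(r n + 1)\<close>-close. Relabelling \<open>H\<^sub>n\<close> so that this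
  ball is pulled back onto the ball of \<open>G\<close> and all remaining vertices get fresh labels above \<open>n\<close>
  gives representatives that converge to \<open>G\<close> in \<open>\<hat>\<G>_*\<close>: every fixed label eventually
  lies deep inside the ball or below all fresh labels.\<close>

section \<open>Set convergence and filters\<close>

lemma set_conv_iff_eventually:
  "set_conv S L \<longleftrightarrow> (\<forall>x. eventually (\<lambda>n. x \<in> S n \<longleftrightarrow> x \<in> L) sequentially)"
proof -
  have liminf: "x \<in> (\<Union>n. \<Inter>n'\<in>{n<..}. S n') \<longleftrightarrow> eventually (\<lambda>n. x \<in> S n) sequentially" for x
    by (auto simp: eventually_at_top_dense)
  have limsup: "x \<in> (\<Inter>n. \<Union>n'\<in>{n<..}. S n') \<longleftrightarrow> frequently (\<lambda>n. x \<in> S n) sequentially" for x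
    by (auto simp: frequently_def eventually_at_top_dense)
  have "(eventually (\<lambda>n. x \<in> S n) sequentially \<longleftrightarrow> x \<in> L) \<and>
        (frequently (\<lambda>n. x \<in> S n) sequentially \<longleftrightarrow> x \<in> L) \<longleftrightarrow>
        eventually (\<lambda>n. x \<in> S n \<longleftrightarrow> x \<in> L) sequentially" for x
    by (cases "x \<in> L")
      (auto simp: frequently_def dest: eventually_frequently[OF sequentially_bot, unfolded frequently_def])
  then show ?thesis
    unfolding set_conv_def set_eq_iff liminf limsup by blast
qed

lemma inf_principal_eq_if_eventually:
  "eventually P F \<Longrightarrow> inf F (principal {x. P x}) = F"
  by (simp add: inf_absorb1 le_principal)

lemma tendsto_if_dist_less_inverse_Suc:
  fixes f :: "'a \<Rightarrow> 'b::metric_space"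
  assumes r: "filterlim r at_top F"
    and dist: "eventually (\<lambda>x. dist (f x) l < inverse (real (Suc (r x)))) F"
  shows "(f \<longlongrightarrow> l) F"
proof (rule tendstoI)
  fix \<epsilon> :: real assume "\<epsilon> > 0"
  then obtain M where M: "inverse (real (Suc M)) < \<epsilon>" using reals_Archimedean by blast
  from dist r[unfolded filterlim_at_top, rule_format, of M]
  show "eventually (\<lambda>x. dist (f x) l < \<epsilon>) F"
  proof eventually_elim
    case (elim x)
    then have "inverse (real (Suc (r x))) \<le> inverse (real (Suc M))"
      by (intro le_imp_inverse_le) auto
    with elim M show ?case by linarith
  qed
qed

lemma eventually_diagonal:
  fixes P :: "nat \<Rightarrow> nat \<Rightarrow> bool"
  assumes "\<And>m. eventually (P m) sequentially"
  obtains r where "filterlim r at_top sequentially" "eventually (\<lambda>n. P (r n) n) sequentially"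
proof -
  from assms obtain K where K: "\<And>m n. K m \<le> n \<Longrightarrow> P m n"
    unfolding eventually_sequentially by metis
  define r where "r n = Max {m. m \<le> n \<and> K m \<le> n}" for n
  have fin: "finite {m. m \<le> n \<and> K m \<le> n}" for n by simp
  have "M \<le> r n" if "max M (K M) \<le> n" for M n
    unfolding r_def using that fin by (intro Max_ge) auto
  then have "filterlim r at_top sequentially"
    unfolding filterlim_at_top eventually_sequentially by blast
  moreover have "P (r n) n" if "K 0 \<le> n" for n
  proof -
    have "r n \<in> {m. m \<le> n \<and> K m \<le> n}" unfolding r_def using that fin by (intro Max_in) auto
    then show ?thesis using K by simp
  qed
  then have "eventually (\<lambda>n. P (r n) n) sequentially"
    unfolding eventually_sequentially by blast
  ultimately show ?thesis by (rule that)
qed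

section \<open>Balls and the root component\<close>

lemma ballV_mono: "k \<le> m \<Longrightarrow> ballV G k \<subseteq> ballV G m"
  by (induction m) (auto simp: le_Suc_eq)

lemma root_in_ballV: "root G \<in> ballV G m"
  using ballV_mono[of 0 m G] by auto

lemma ballV_subset_verts: "wf_graph G \<Longrightarrow> ballV G m \<subseteq> verts G"
  by (induction m) (auto simp: wf_graph_def)

lemma finite_ballV: "wf_graph G \<Longrightarrow> finite (ballV G m)"
proof (induction m)
  case (Suc m)
  have "{v. \<exists>u \<in> ballV G m. (u, v) \<in> edges G} = (\<Union>u\<in>ballV G m. {v. (u, v) \<in> edges G})"
    by auto
  moreover have "finite {v. (u, v) \<in> edges G}" if "u \<in> ballV G m" for u
    using that ballV_subset_verts[OF Suc.prems] Suc.prems unfolding wf_graph_def by blast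
  ultimately show ?case using Suc by simp
qed simp

lemma ballV_subset_compV: "ballV G m \<subseteq> compV G"
  unfolding compV_def by auto

lemma compV_subset_verts: "wf_graph G \<Longrightarrow> compV G \<subseteq> verts G"
  unfolding compV_def using ballV_subset_verts by blast

lemma root_comp_simps [simp]:
  "verts (root_comp G) = compV G" "root (root_comp G) = root G"
  "vmark (root_comp G) = vmark G" "emark (root_comp G) = emark G"
  by (simp_all add: root_comp_def)

lemma edges_root_comp: "edges (root_comp G) = edges G \<inter> compV G \<times> compV G"
  by (simp add: root_comp_def)

lemma ballV_root_comp [simp]: "ballV (root_comp G) m = ballV G m"
proof (induction m)
  case (Suc m)
  have "v \<in> compV G" if "u \<in> ballV G m" "(u, v) \<in> edges G" for u v
    using that ballV_subset_compV[of G "Suc m"] by auto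
  then show ?case using Suc ballV_subset_compV[of G m] by (auto simp: edges_root_comp)
qed simp

lemma compV_root_comp: "compV (root_comp G) = compV G"
  unfolding compV_def by simp

lemma connected_root_comp: "connected_graph (root_comp G)"
  by (simp add: connected_graph_def compV_root_comp)

lemma wf_root_comp:
  assumes "wf_graph G"
  shows "wf_graph (root_comp G)"
proof -
  have "finite {u. (v, u) \<in> edges (root_comp G)}" if "v \<in> compV G" for v
  proof (rule finite_subset)
    show "{u. (v, u) \<in> edges (root_comp G)} \<subseteq> {u. (v, u) \<in> edges G}"
      by (auto simp: edges_root_comp)
    show "finite {u. (v, u) \<in> edges G}"
      using assms that compV_subset_verts unfolding wf_graph_def by blast
  qed
  moreover have "root G \<in> compV G" using ballV_subset_compV[of G 0] by simp
  ultimately show ?thesis using assms unfolding wf_graph_def by (auto simp: edges_root_comp)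
qed

lemma edges_root_comp_ballV:
  "u \<in> ballV G m \<Longrightarrow> v \<in> ballV G m \<Longrightarrow> (u, v) \<in> edges (root_comp G) \<longleftrightarrow> (u, v) \<in> edges G"
  using ballV_subset_compV[of G m] by (auto simp: edges_root_comp)

lemma ball_iso_root_comp:
  "ball_iso m \<phi> (root_comp G) (root_comp H) \<longleftrightarrow> ball_iso m \<phi> G H"
proof -
  have "(\<phi> u, \<phi> v) \<in> edges (root_comp H) \<longleftrightarrow> (\<phi> u, \<phi> v) \<in> edges H"
    if "\<phi> ` ballV G m = ballV H m" "u \<in> ballV G m" "v \<in> ballV G m" for u v
    using that by (intro edges_root_comp_ballV) auto
  then show ?thesis
    unfolding ball_iso_def bij_betw_def by (auto simp: edges_root_comp_ballV)
qed

section \<open>Rooted isomorphisms\<close>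

definition rooted_iso :: "(nat \<Rightarrow> nat) \<Rightarrow> ('e, 'v) mgraph \<Rightarrow> ('e, 'v) mgraph \<Rightarrow> bool" where
  "rooted_iso \<phi> G H \<longleftrightarrow> bij_betw \<phi> (verts G) (verts H) \<and> \<phi> (root G) = root H \<and>
     (\<forall>u \<in> verts G. \<forall>v \<in> verts G. (u, v) \<in> edges G \<longleftrightarrow> (\<phi> u, \<phi> v) \<in> edges H)"

lemma mg_iso_iff_rooted_iso:
  "mg_iso G H \<longleftrightarrow> (\<exists>\<phi>. rooted_iso \<phi> G H \<and> (\<forall>v \<in> verts G. vmark H (\<phi> v) = vmark G v) \<and>
     (\<forall>u v. (u, v) \<in> edges G \<longrightarrow> emark H (\<phi> u, \<phi> v) = emark G (u, v)))"
  unfolding mg_iso_def rooted_iso_def by blast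

text \<open>Covers both isomorphisms (\<open>S = verts G\<close>) and ball isomorphisms (\<open>S = ballV G m\<close>).\<close>
lemma image_ballV_eq:
  assumes bij: "bij_betw \<phi> S T" and root: "\<phi> (root G) = root H"
    and edges: "\<forall>u \<in> S. \<forall>v \<in> S. (u, v) \<in> edges G \<longleftrightarrow> (\<phi> u, \<phi> v) \<in> edges H"
    and "ballV G k \<subseteq> S" "ballV H k \<subseteq> T"
  shows "\<phi> ` ballV G k = ballV H k"
  using assms(4,5)
proof (induction k)
  case 0
  then show ?case using root by simp
next
  case (Suc k)
  have sub: "ballV G k \<subseteq> S" "ballV H k \<subseteq> T"
    using Suc.prems ballV_mono[of k "Suc k" G] ballV_mono[of k "Suc k" H] by auto
  note IH = Suc.IH[OF sub]
  have "\<phi> ` {v. \<exists>u \<in> ballV G k. (u, v) \<in> edges G} = {v. \<exists>u \<in> ballV H k. (u, v) \<in> edges H}"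
  proof (intro equalityI subsetI)
    fix x assume "x \<in> \<phi> ` {v. \<exists>u \<in> ballV G k. (u, v) \<in> edges G}"
    then obtain u v where uv: "x = \<phi> v" "u \<in> ballV G k" "(u, v) \<in> edges G" by blast
    then have "u \<in> S" "v \<in> S" using Suc.prems sub by auto
    with uv edges have "(\<phi> u, \<phi> v) \<in> edges H" by blast
    with uv IH show "x \<in> {v. \<exists>u \<in> ballV H k. (u, v) \<in> edges H}" by blast
  next
    fix x assume "x \<in> {v. \<exists>u \<in> ballV H k. (u, v) \<in> edges H}"
    then obtain u' where u': "u' \<in> ballV H k" "(u', x) \<in> edges H" by blast
    then obtain u where u: "u \<in> ballV G k" "u' = \<phi> u" using IH by blast
    have "x \<in> T" using u' Suc.prems by auto
    then obtain v where v: "v \<in> S" "x = \<phi> v" using bij by (auto simp: bij_betw_def)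
    have "(u, v) \<in> edges G" using edges u u' v sub by blast
    then show "x \<in> \<phi> ` {v. \<exists>u \<in> ballV G k. (u, v) \<in> edges G}" using u v by blast
  qed
  then show ?case using IH by (simp add: image_Un)
qed

lemma rooted_iso_image_ballV:
  assumes "wf_graph G" "wf_graph H" "rooted_iso \<phi> G H"
  shows "\<phi> ` ballV G k = ballV H k"
  using assms(3) ballV_subset_verts[OF assms(1)] ballV_subset_verts[OF assms(2)]
  unfolding rooted_iso_def by (intro image_ballV_eq[of \<phi> "verts G" "verts H"]) blast+

lemma rooted_iso_connected:
  assumes "wf_graph G" "wf_graph H" "rooted_iso \<phi> G H" "connected_graph G"
  shows "connected_graph H"
proof -
  have "verts H = \<phi> ` verts G" using assms(3) by (auto simp: rooted_iso_def bij_betw_def)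
  also have "\<dots> = \<phi> ` compV G" using assms(4) by (simp add: connected_graph_def)
  also have "\<dots> = compV H"
    unfolding compV_def image_UN using rooted_iso_image_ballV[OF assms(1-3)] by simp
  finally show ?thesis by (simp add: connected_graph_def)
qed

lemma rooted_iso_ball_iso:
  assumes "wf_graph G" "wf_graph H" "rooted_iso \<phi> G H"
  shows "ball_iso m \<phi> G H"
proof -
  have "inj_on \<phi> (ballV G m)"
    using assms(3) ballV_subset_verts[OF assms(1)] unfolding rooted_iso_def bij_betw_def
    by (blast intro: inj_on_subset)
  then have "bij_betw \<phi> (ballV G m) (ballV H m)"
    by (simp add: bij_betw_def rooted_iso_image_ballV[OF assms])
  then show ?thesis
    using assms(3) ballV_subset_verts[OF assms(1)] unfolding ball_iso_def rooted_iso_def by blast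
qed

lemma ball_iso_image_ballV:
  assumes "ball_iso m \<phi> G H" "k \<le> m"
  shows "\<phi> ` ballV G k = ballV H k"
  using assms(1) ballV_mono[OF assms(2), of G] ballV_mono[OF assms(2), of H]
  unfolding ball_iso_def by (intro image_ballV_eq[of \<phi> "ballV G m" "ballV H m"]) blast+

lemma ball_iso_comp:
  assumes \<psi>: "ball_iso m \<psi> G H" and \<phi>: "ball_iso m \<phi> H K"
  shows "ball_iso m (\<phi> \<circ> \<psi>) G K"
proof -
  have "\<psi> u \<in> ballV H m" if "u \<in> ballV G m" for u
    using that \<psi> by (auto simp: ball_iso_def bij_betw_def)
  then show ?thesis
    using assms unfolding ball_iso_def by (auto intro: bij_betw_trans)
qed

lemma local_conv_mg_iso:
  fixes Hs :: "nat \<Rightarrow> ('e::topological_space, 'v::topological_space) mgraph"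
  assumes lc: "local_conv Hs H" and iso: "mg_iso G H" and wf: "wf_graph G" "wf_graph H"
  shows "local_conv Hs G"
  unfolding local_conv_def
proof
  fix m
  obtain \<psi> where \<psi>: "rooted_iso \<psi> G H"
    and vm: "\<forall>v \<in> verts G. vmark H (\<psi> v) = vmark G v"
    and em: "\<forall>u v. (u, v) \<in> edges G \<longrightarrow> emark H (\<psi> u, \<psi> v) = emark G (u, v)"
    using iso unfolding mg_iso_iff_rooted_iso by blast
  have ball: "ball_iso m \<psi> G H" using rooted_iso_ball_iso[OF wf \<psi>] .
  have maps: "\<psi> v \<in> ballV H m" if "v \<in> ballV G m" for v
    using that rooted_iso_image_ballV[OF wf \<psi>] by blast
  have edges: "(\<psi> u, \<psi> v) \<in> edges H" if "u \<in> ballV G m" "v \<in> ballV G m" "(u, v) \<in> edges G" for u v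
    using that ball unfolding ball_iso_def by blast
  from lc obtain N \<Phi> where N: "\<forall>n>N. ball_iso m (\<Phi> n) H (Hs n)"
    and V: "\<forall>v \<in> ballV H m. (\<lambda>n. vmark (Hs n) (\<Phi> n v)) \<longlonglongrightarrow> vmark H v"
    and E: "\<forall>u \<in> ballV H m. \<forall>v \<in> ballV H m. (u, v) \<in> edges H \<longrightarrow>
              (\<lambda>n. emark (Hs n) (\<Phi> n u, \<Phi> n v)) \<longlonglongrightarrow> emark H (u, v)"
    unfolding local_conv_def by blast
  have "\<forall>n>N. ball_iso m (\<Phi> n \<circ> \<psi>) G (Hs n)"
    using N ball_iso_comp[OF ball] by blast
  moreover have "(\<lambda>n. vmark (Hs n) ((\<Phi> n \<circ> \<psi>) v)) \<longlonglongrightarrow> vmark G v" if v: "v \<in> ballV G m" for v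
  proof -
    have "vmark H (\<psi> v) = vmark G v" using vm v ballV_subset_verts[OF wf(1)] by blast
    with V maps[OF v] show ?thesis by fastforce
  qed
  moreover have "(\<lambda>n. emark (Hs n) ((\<Phi> n \<circ> \<psi>) u, (\<Phi> n \<circ> \<psi>) v)) \<longlonglongrightarrow> emark G (u, v)"
    if uv: "u \<in> ballV G m" "v \<in> ballV G m" "(u, v) \<in> edges G" for u v
  proof -
    have "emark H (\<psi> u, \<psi> v) = emark G (u, v)" using em uv(3) by blast
    with E maps[OF uv(1)] maps[OF uv(2)] edges[OF uv] show ?thesis by fastforce
  qed
  ultimately show "\<exists>N \<phi>. (\<forall>n>N. ball_iso m (\<phi> n) G (Hs n)) \<and>
      (\<forall>v \<in> ballV G m. (\<lambda>n. vmark (Hs n) (\<phi> n v)) \<longlonglongrightarrow> vmark G v) \<and>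
      (\<forall>u \<in> ballV G m. \<forall>v \<in> ballV G m. (u, v) \<in> edges G \<longrightarrow>
         (\<lambda>n. emark (Hs n) (\<phi> n u, \<phi> n v)) \<longlonglongrightarrow> emark G (u, v))"
    by (intro exI[of _ N] exI[of _ "\<lambda>n. \<Phi> n \<circ> \<psi>"]) blast
qed

section \<open>Convergence of labelled graphs\<close>

lemma le_Max_cl:
  assumes "wf_graph G" "u \<in> verts G" "(u, w) \<in> edges G"
  shows "w \<le> Max (cl G u)"
proof (rule Max_ge)
  show "finite (cl G u)" using assms(1,2) unfolding cl_def wf_graph_def by auto
qed (use assms(3) in \<open>simp add: cl_def\<close>)

text \<open>Convergence of \<open>Max (cl (Gs n) u)\<close> bounds the labels of all neighbours of \<open>u\<close>, so the
  pointwise convergence of the edge sets becomes uniform on the neighbourhood of \<open>u\<close>.\<close>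
lemma hat_conv_eventually_neighbours_eq:
  fixes Gs :: "nat \<Rightarrow> ('e::topological_space, 'v::topological_space) mgraph"
  assumes wfs: "\<And>n. wf_graph (Gs n)" and wf: "wf_graph G" and hc: "hat_conv Gs G"
    and u: "u \<in> verts G"
  shows "eventually (\<lambda>n. \<forall>w. (u, w) \<in> edges (Gs n) \<longleftrightarrow> (u, w) \<in> edges G) sequentially"
proof -
  define M where "M = Max (cl G u)"
  have vert: "eventually (\<lambda>n. u \<in> verts (Gs n)) sequentially"
    using hc u unfolding hat_conv_def set_conv_iff_eventually by (auto elim: eventually_mono)
  have "((\<lambda>n. Max (cl (Gs n) u)) \<longlongrightarrow> M) (inf sequentially (principal {n. u \<in> verts (Gs n)}))"
    using hc u unfolding hat_conv_def M_def by blast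
  then have "((\<lambda>n. Max (cl (Gs n) u)) \<longlongrightarrow> M) sequentially"
    unfolding inf_principal_eq_if_eventually[OF vert] .
  then have max: "eventually (\<lambda>n. Max (cl (Gs n) u) = M) sequentially"
    by (simp add: tendsto_discrete)
  have below: "eventually (\<lambda>n. \<forall>w \<in> {..M}. (u, w) \<in> edges (Gs n) \<longleftrightarrow> (u, w) \<in> edges G) sequentially"
    using hc unfolding hat_conv_def set_conv_iff_eventually
    by (intro eventually_ball_finite) auto
  from vert max below show ?thesis
  proof eventually_elim
    case (elim n)
    have "(u, w) \<notin> edges (Gs n)" "(u, w) \<notin> edges G" if "\<not> w \<le> M" for w
      using that elim le_Max_cl[OF wfs, of u n w] le_Max_cl[OF wf u, of w] unfolding M_def by auto
    with elim show ?case by (metis atMost_iff)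
  qed
qed

lemma set_conv_edges_if_eventually_neighbours_eq:
  assumes wfs: "\<And>n. wf_graph (Gs n)" and wf: "wf_graph G"
    and verts: "\<forall>x. eventually (\<lambda>n. x \<in> verts (Gs n) \<longleftrightarrow> x \<in> verts G) sequentially"
    and nbrs: "\<forall>u \<in> verts G. eventually (\<lambda>n. \<forall>w. (u, w) \<in> edges (Gs n) \<longleftrightarrow> (u, w) \<in> edges G) sequentially"
  shows "set_conv (\<lambda>n. edges (Gs n)) (edges G)"
  unfolding set_conv_iff_eventually
proof
  fix e :: "nat \<times> nat"
  obtain a b where e: "e = (a, b)" by fastforce
  show "eventually (\<lambda>n. e \<in> edges (Gs n) \<longleftrightarrow> e \<in> edges G) sequentially"
  proof (cases "a \<in> verts G")
    case True
    with nbrs have "eventually (\<lambda>n. \<forall>w. (a, w) \<in> edges (Gs n) \<longleftrightarrow> (a, w) \<in> edges G) sequentially"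
      by blast
    then show ?thesis unfolding e by (rule eventually_mono) blast
  next
    case False
    then have "(a, b) \<notin> edges G" using wf unfolding wf_graph_def by auto
    moreover from verts[rule_format, of a] False
    have "eventually (\<lambda>n. a \<notin> verts (Gs n)) sequentially" by simp
    then have "eventually (\<lambda>n. (a, b) \<notin> edges (Gs n)) sequentially"
      by (rule eventually_mono) (use wfs[unfolded wf_graph_def] in blast)
    ultimately show ?thesis unfolding e by (auto elim: eventually_mono)
  qed
qed

lemma hat_conv_iff_eventually:
  fixes Gs :: "nat \<Rightarrow> ('e::topological_space, 'v::topological_space) mgraph"
  assumes wfs: "\<And>n. wf_graph (Gs n)" and wf: "wf_graph G"
  shows "hat_conv Gs G \<longleftrightarrow>
    (\<forall>x. eventually (\<lambda>n. x \<in> verts (Gs n) \<longleftrightarrow> x \<in> verts G) sequentially) \<and>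
    (\<forall>u \<in> verts G. eventually (\<lambda>n. \<forall>w. (u, w) \<in> edges (Gs n) \<longleftrightarrow> (u, w) \<in> edges G) sequentially) \<and>
    eventually (\<lambda>n. root (Gs n) = root G) sequentially \<and>
    (\<forall>e \<in> edges G. (\<lambda>n. emark (Gs n) e) \<longlonglongrightarrow> emark G e) \<and>
    (\<forall>v \<in> verts G. (\<lambda>n. vmark (Gs n) v) \<longlonglongrightarrow> vmark G v)"
  (is "_ \<longleftrightarrow> ?verts \<and> ?nbrs \<and> ?root \<and> ?emark \<and> ?vmark")
proof -
  have vfilter: "inf sequentially (principal {n. v \<in> verts (Gs n)}) = sequentially"
    if "?verts" "v \<in> verts G" for v
    using that(1)[rule_format, of v] that(2) by (intro inf_principal_eq_if_eventually) simp
  have efilter: "inf sequentially (principal {n. e \<in> edges (Gs n)}) = sequentially"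
    if "set_conv (\<lambda>n. edges (Gs n)) (edges G)" "e \<in> edges G" for e
    using that(1)[unfolded set_conv_iff_eventually, rule_format, of e] that(2)
    by (intro inf_principal_eq_if_eventually) simp
  show ?thesis
  proof
    assume hc: "hat_conv Gs G"
    then have "?verts" "set_conv (\<lambda>n. edges (Gs n)) (edges G)"
      unfolding hat_conv_def set_conv_iff_eventually by blast+
    with hc show "?verts \<and> ?nbrs \<and> ?root \<and> ?emark \<and> ?vmark"
      using hat_conv_eventually_neighbours_eq[of Gs G, OF wfs wf hc] vfilter efilter
      unfolding hat_conv_def by (simp add: tendsto_discrete)
  next
    assume conds: "?verts \<and> ?nbrs \<and> ?root \<and> ?emark \<and> ?vmark"
    then have edges: "set_conv (\<lambda>n. edges (Gs n)) (edges G)"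
      using set_conv_edges_if_eventually_neighbours_eq[of Gs G, OF wfs wf] by blast
    have "eventually (\<lambda>n. Max (cl (Gs n) v) = Max (cl G v)) sequentially" if "v \<in> verts G" for v
    proof -
      from conds that
      have "eventually (\<lambda>n. \<forall>w. (v, w) \<in> edges (Gs n) \<longleftrightarrow> (v, w) \<in> edges G) sequentially"
        by blast
      then show ?thesis by (rule eventually_mono) (simp add: cl_def)
    qed
    with conds edges vfilter efilter show "hat_conv Gs G"
      unfolding hat_conv_def set_conv_iff_eventually by (simp add: tendsto_discrete)
  qed
qed

lemma hat_conv_eventually_ball_iso_id:
  fixes Gs :: "nat \<Rightarrow> ('e::topological_space, 'v::topological_space) mgraph"
  assumes wfs: "\<And>n. wf_graph (Gs n)" and wf: "wf_graph G" and hc: "hat_conv Gs G"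
  shows "eventually (\<lambda>n. ball_iso m id G (Gs n)) sequentially"
proof -
  have root: "eventually (\<lambda>n. root (Gs n) = root G) sequentially"
    and nbrs: "\<And>u. u \<in> verts G \<Longrightarrow>
      eventually (\<lambda>n. \<forall>w. (u, w) \<in> edges (Gs n) \<longleftrightarrow> (u, w) \<in> edges G) sequentially"
    using hc unfolding hat_conv_iff_eventually[of Gs G, OF wfs wf] by blast+
  have nbrs_ball: "eventually (\<lambda>n. \<forall>u \<in> ballV G k. \<forall>w. (u, w) \<in> edges (Gs n) \<longleftrightarrow> (u, w) \<in> edges G)
      sequentially" for k
    using nbrs ballV_subset_verts[OF wf] by (intro eventually_ball_finite finite_ballV[OF wf]) blast
  have balls: "eventually (\<lambda>n. ballV (Gs n) k = ballV G k) sequentially" for k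
  proof (induction k)
    case 0
    from root show ?case by (rule eventually_mono) simp
  next
    case (Suc k)
    from Suc.IH nbrs_ball[of k] show ?case by eventually_elim auto
  qed
  from balls[of m] nbrs_ball[of m] root show ?thesis
  proof eventually_elim
    case (elim n)
    then show ?case by (auto simp: ball_iso_def)
  qed
qed

lemma local_conv_root_comp_if_hat_conv:
  fixes Gs :: "nat \<Rightarrow> ('e::topological_space, 'v::topological_space) mgraph"
  assumes wfs: "\<And>n. wf_graph (Gs n)" and wf: "wf_graph G" and hc: "hat_conv Gs G"
  shows "local_conv (\<lambda>n. root_comp (Gs n)) (root_comp G)"
  unfolding local_conv_def
proof
  fix m
  obtain N where N: "\<And>n. n \<ge> N \<Longrightarrow> ball_iso m id G (Gs n)"
    using hat_conv_eventually_ball_iso_id[of Gs G, OF wfs wf hc] unfolding eventually_sequentially by blast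
  have marks: "\<forall>e \<in> edges G. (\<lambda>n. emark (Gs n) e) \<longlonglongrightarrow> emark G e"
    "\<forall>v \<in> verts G. (\<lambda>n. vmark (Gs n) v) \<longlonglongrightarrow> vmark G v"
    using hc unfolding hat_conv_iff_eventually[of Gs G, OF wfs wf] by blast+
  have "\<forall>n>N. ball_iso m id (root_comp G) (root_comp (Gs n))"
    using N by (simp add: ball_iso_root_comp)
  moreover have "\<forall>v \<in> ballV (root_comp G) m. (\<lambda>n. vmark (root_comp (Gs n)) (id v)) \<longlonglongrightarrow> vmark (root_comp G) v"
    using marks(2) ballV_subset_verts[OF wf] by auto
  moreover have "\<forall>u \<in> ballV (root_comp G) m. \<forall>v \<in> ballV (root_comp G) m. (u, v) \<in> edges (root_comp G) \<longrightarrow>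
      (\<lambda>n. emark (root_comp (Gs n)) (id u, id v)) \<longlonglongrightarrow> emark (root_comp G) (u, v)"
    using marks(1) by (auto simp: edges_root_comp)
  ultimately show "\<exists>N \<phi>. (\<forall>n>N. ball_iso m (\<phi> n) (root_comp G) (root_comp (Gs n))) \<and>
      (\<forall>v \<in> ballV (root_comp G) m. (\<lambda>n. vmark (root_comp (Gs n)) (\<phi> n v)) \<longlonglongrightarrow> vmark (root_comp G) v) \<and>
      (\<forall>u \<in> ballV (root_comp G) m. \<forall>v \<in> ballV (root_comp G) m. (u, v) \<in> edges (root_comp G) \<longrightarrow>
         (\<lambda>n. emark (root_comp (Gs n)) (\<phi> n u, \<phi> n v)) \<longlonglongrightarrow> emark (root_comp G) (u, v))"
    by (intro exI[of _ N] exI[of _ "\<lambda>n. id"]) blast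
qed

section \<open>Relabelling vertices\<close>

definition relabel :: "(nat \<Rightarrow> nat) \<Rightarrow> ('e, 'v) mgraph \<Rightarrow> ('e, 'v) mgraph" where
  "relabel \<rho> H = \<lparr>verts = \<rho> ` verts H, edges = (\<lambda>(u, v). (\<rho> u, \<rho> v)) ` edges H,
     root = \<rho> (root H),
     emark = (\<lambda>(a, b). emark H (inv_into (verts H) \<rho> a, inv_into (verts H) \<rho> b)),
     vmark = (\<lambda>a. vmark H (inv_into (verts H) \<rho> a))\<rparr>"

lemma relabel_simps:
  "verts (relabel \<rho> H) = \<rho> ` verts H" "root (relabel \<rho> H) = \<rho> (root H)"
  "edges (relabel \<rho> H) = (\<lambda>(u, v). (\<rho> u, \<rho> v)) ` edges H"
  "vmark (relabel \<rho> H) a = vmark H (inv_into (verts H) \<rho> a)"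
  "emark (relabel \<rho> H) (a, b) = emark H (inv_into (verts H) \<rho> a, inv_into (verts H) \<rho> b)"
  by (simp_all add: relabel_def)

lemma edges_relabelE:
  assumes "wf_graph H" "(a, b) \<in> edges (relabel \<rho> H)"
  obtains u v where "u \<in> verts H" "v \<in> verts H" "a = \<rho> u" "b = \<rho> v" "(u, v) \<in> edges H"
  using assms unfolding wf_graph_def by (auto simp: relabel_simps)

lemma edges_relabel_iff:
  assumes wf: "wf_graph H" and inj: "inj_on \<rho> (verts H)" and "u \<in> verts H" "v \<in> verts H"
  shows "(\<rho> u, \<rho> v) \<in> edges (relabel \<rho> H) \<longleftrightarrow> (u, v) \<in> edges H"
proof
  assume "(\<rho> u, \<rho> v) \<in> edges (relabel \<rho> H)"
  then obtain u' v' where "u' \<in> verts H" "v' \<in> verts H" "\<rho> u = \<rho> u'" "\<rho> v = \<rho> v'" "(u', v') \<in> edges H"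
    by (rule edges_relabelE[OF wf])
  with inj assms(3,4) show "(u, v) \<in> edges H" unfolding inj_on_def by metis
qed (auto simp: relabel_simps)

lemma rooted_iso_relabel:
  assumes "wf_graph H" "inj_on \<rho> (verts H)"
  shows "rooted_iso \<rho> H (relabel \<rho> H)"
  using assms edges_relabel_iff[OF assms]
  unfolding rooted_iso_def by (simp add: relabel_simps inj_on_imp_bij_betw)

lemma wf_relabel:
  assumes wf: "wf_graph H" and inj: "inj_on \<rho> (verts H)"
  shows "wf_graph (relabel \<rho> H)"
proof -
  let ?R = "relabel \<rho> H"
  have "finite {b. (a, b) \<in> edges ?R}" if "a \<in> verts ?R" for a
  proof -
    from that obtain u where u: "u \<in> verts H" "a = \<rho> u" by (auto simp: relabel_simps)
    have "{b. (a, b) \<in> edges ?R} \<subseteq> \<rho> ` {v. (u, v) \<in> edges H}"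
    proof
      fix b assume "b \<in> {b. (a, b) \<in> edges ?R}"
      then have "(a, b) \<in> edges ?R" by simp
      then obtain u' v where uv: "u' \<in> verts H" "v \<in> verts H" "a = \<rho> u'" "b = \<rho> v" "(u', v) \<in> edges H"
        by (rule edges_relabelE[OF wf])
      then have "u' = u" using inj u by (simp add: inj_on_eq_iff)
      with uv show "b \<in> \<rho> ` {v. (u, v) \<in> edges H}" by blast
    qed
    moreover have "finite {v. (u, v) \<in> edges H}" using wf u unfolding wf_graph_def by blast
    ultimately show ?thesis by (rule finite_subset[OF _ finite_imageI])
  qed
  moreover have "(a, a) \<notin> edges ?R" for a
  proof
    assume "(a, a) \<in> edges ?R"
    then obtain u v where uv: "u \<in> verts H" "v \<in> verts H" "a = \<rho> u" "a = \<rho> v" "(u, v) \<in> edges H"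
      by (rule edges_relabelE[OF wf])
    then have "u = v" using inj by (simp add: inj_on_eq_iff)
    with uv(5) wf show False unfolding wf_graph_def by blast
  qed
  moreover have "(b, a) \<in> edges ?R \<and> emark ?R (a, b) = emark ?R (b, a)" if "(a, b) \<in> edges ?R" for a b
  proof -
    from that obtain u v where uv: "u \<in> verts H" "v \<in> verts H" "a = \<rho> u" "b = \<rho> v" "(u, v) \<in> edges H"
      by (rule edges_relabelE[OF wf])
    then have "(v, u) \<in> edges H" "emark H (u, v) = emark H (v, u)"
      using wf unfolding wf_graph_def by blast+
    moreover have "inv_into (verts H) \<rho> a = u" "inv_into (verts H) \<rho> b = v"
      using inj uv by (simp_all add: inv_into_f_f)
    ultimately show ?thesis
      using edges_relabel_iff[OF wf inj uv(2,1)] uv(3,4) by (simp add: relabel_simps)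
  qed
  moreover have "root ?R \<in> verts ?R" "edges ?R \<subseteq> verts ?R \<times> verts ?R"
  proof -
    have "root H \<in> verts H" "edges H \<subseteq> verts H \<times> verts H"
      using wf unfolding wf_graph_def by blast+
    then show "root ?R \<in> verts ?R" "edges ?R \<subseteq> verts ?R \<times> verts ?R"
      by (auto simp: relabel_simps)
  qed
  ultimately show ?thesis unfolding wf_graph_def by blast
qed

lemma mg_iso_relabel:
  assumes wf: "wf_graph H" and inj: "inj_on \<rho> (verts H)"
  shows "mg_iso (relabel \<rho> H) H"
  unfolding mg_iso_def
proof (intro exI[of _ "inv_into (verts H) \<rho>"] conjI ballI allI impI)
  show "bij_betw (inv_into (verts H) \<rho>) (verts (relabel \<rho> H)) (verts H)"
    using inj by (simp add: relabel_simps bij_betw_inv_into inj_on_imp_bij_betw)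
  show "inv_into (verts H) \<rho> (root (relabel \<rho> H)) = root H"
    using wf inj by (simp add: relabel_simps inv_into_f_f wf_graph_def)
  fix a assume a: "a \<in> verts (relabel \<rho> H)"
  then show "vmark H (inv_into (verts H) \<rho> a) = vmark (relabel \<rho> H) a"
    by (simp add: relabel_simps)
  fix b assume b: "b \<in> verts (relabel \<rho> H)"
  from a b obtain u v where uv: "u \<in> verts H" "v \<in> verts H" "a = \<rho> u" "b = \<rho> v"
    by (auto simp: relabel_simps)
  show "(a, b) \<in> edges (relabel \<rho> H) \<longleftrightarrow>
      (inv_into (verts H) \<rho> a, inv_into (verts H) \<rho> b) \<in> edges H"
    using edges_relabel_iff[OF wf inj uv(1,2)] uv inj by (simp add: inv_into_f_f)
qed (simp add: relabel_simps)

lemma connected_relabel: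
  assumes "wf_graph H" "inj_on \<rho> (verts H)" "connected_graph H"
  shows "connected_graph (relabel \<rho> H)"
  using rooted_iso_connected[OF assms(1) wf_relabel[OF assms(1,2)] rooted_iso_relabel[OF assms(1,2)] assms(3)] .

locale ball_relabelling =
  fixes G H :: "('e, 'v) mgraph" and m n :: nat and \<psi> :: "nat \<Rightarrow> nat"
  assumes wf_G: "wf_graph G" and wf_H: "wf_graph H" and ball_iso: "ball_iso m \<psi> G H"
begin

text \<open>The \<open>m\<close>-ball of \<open>H\<close> is pulled back onto that of \<open>G\<close> along \<open>\<psi>\<close>; every other vertex
  gets a fresh label above \<open>n\<close>, so that, as \<open>n\<close> grows, these labels escape to infinity.\<close>
definition relabelling :: "nat \<Rightarrow> nat" where
  "relabelling k = (if k \<in> ballV H m then inv_into (ballV G m) \<psi> k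
     else enumerate {k. n < k \<and> k \<notin> ballV G m} k)"

lemma bij_betw_ballV: "bij_betw \<psi> (ballV G m) (ballV H m)"
  using ball_iso unfolding ball_iso_def by blast

lemma \<psi>_in_ballV: "v \<in> ballV G m \<Longrightarrow> \<psi> v \<in> ballV H m"
  using bij_betw_ballV by (auto simp: bij_betw_def)

lemma infinite_fresh_labels: "infinite {k. n < k \<and> k \<notin> ballV G m}"
proof -
  have "{k. n < k \<and> k \<notin> ballV G m} = {n<..} - ballV G m" by auto
  then show ?thesis using finite_ballV[OF wf_G] infinite_Ioi[of n] by (simp add: Diff_infinite_finite)
qed

lemma relabelling_ballV:
  assumes "k \<in> ballV H m"
  shows "relabelling k \<in> ballV G m" "\<psi> (relabelling k) = k"
  using assms bij_betw_ballV
  by (simp_all add: relabelling_def inv_into_into bij_betw_def f_inv_into_f)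

lemma relabelling_fresh:
  assumes "k \<notin> ballV H m"
  shows "n < relabelling k" "relabelling k \<notin> ballV G m"
  using assms enumerate_in_set[OF infinite_fresh_labels] by (simp_all add: relabelling_def)

lemma relabelling_inverse: "v \<in> ballV G m \<Longrightarrow> relabelling (\<psi> v) = v"
  using bij_betw_ballV \<psi>_in_ballV by (simp add: relabelling_def bij_betw_def inv_into_f_f)

lemma inj_relabelling: "inj relabelling"
proof (rule injI)
  fix x y assume eq: "relabelling x = relabelling y"
  consider "x \<in> ballV H m" "y \<in> ballV H m" | "x \<notin> ballV H m" "y \<notin> ballV H m"
    | "x \<in> ballV H m \<longleftrightarrow> y \<notin> ballV H m"
    by blast
  then show "x = y"
  proof cases
    case 1
    then show ?thesis using eq relabelling_ballV(2) by metis
  next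
    case 2
    then show ?thesis
      using eq inj_enumerate[OF infinite_fresh_labels] by (simp add: relabelling_def injD)
  next
    case 3
    then show ?thesis using eq relabelling_ballV(1) relabelling_fresh(2) by metis
  qed
qed

lemma inv_into_relabelling: "v \<in> ballV G m \<Longrightarrow> inv_into (verts H) relabelling v = \<psi> v"
  using inj_relabelling relabelling_inverse \<psi>_in_ballV ballV_subset_verts[OF wf_H, of m]
  by (metis inj_on_subset inv_into_f_f subset_UNIV subsetD)

lemma verts_relabel_subset: "verts (relabel relabelling H) \<subseteq> ballV G m \<union> {n<..}"
  using relabelling_ballV(1) relabelling_fresh(1) by (auto simp: relabel_simps)

lemma ballV_subset_verts_relabel: "ballV G m \<subseteq> verts (relabel relabelling H)"
proof
  fix v assume "v \<in> ballV G m"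
  then have "\<psi> v \<in> verts H" "relabelling (\<psi> v) = v"
    using \<psi>_in_ballV ballV_subset_verts[OF wf_H, of m] relabelling_inverse by auto
  then show "v \<in> verts (relabel relabelling H)" unfolding relabel_simps by (metis image_eqI)
qed

lemma root_relabel: "root (relabel relabelling H) = root G"
  using ball_iso relabelling_inverse[OF root_in_ballV] by (simp add: relabel_simps ball_iso_def)

lemma marks_relabel:
  "v \<in> ballV G m \<Longrightarrow> vmark (relabel relabelling H) v = vmark H (\<psi> v)"
  "a \<in> ballV G m \<Longrightarrow> b \<in> ballV G m \<Longrightarrow> emark (relabel relabelling H) (a, b) = emark H (\<psi> a, \<psi> b)"
  by (simp_all add: relabel_simps inv_into_relabelling)

text \<open>Edges are only controlled at vertices strictly inside the \<open>m\<close>-ball, since \<open>\<psi>\<close> need not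
  respect edges leaving the ball.\<close>
lemma edges_relabel_inner:
  assumes "k < m" "a \<in> ballV G k"
  shows "(a, b) \<in> edges (relabel relabelling H) \<longleftrightarrow> (a, b) \<in> edges G"
proof -
  have sub: "ballV G (Suc k) \<subseteq> ballV G m" "ballV H (Suc k) \<subseteq> ballV H m"
    using assms(1) ballV_mono[of "Suc k" m] by auto
  have a: "a \<in> ballV G m" "\<psi> a \<in> ballV H k"
    using assms(2) sub ball_iso_image_ballV[OF ball_iso, of k] assms(1) by auto
  have edges: "(u, v) \<in> edges G \<longleftrightarrow> (\<psi> u, \<psi> v) \<in> edges H" if "u \<in> ballV G m" "v \<in> ballV G m" for u v
    using that ball_iso unfolding ball_iso_def by blast
  show ?thesis
  proof
    assume "(a, b) \<in> edges (relabel relabelling H)"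
    then obtain x y where xy: "x \<in> verts H" "y \<in> verts H" "a = relabelling x" "b = relabelling y"
        "(x, y) \<in> edges H"
      by (rule edges_relabelE[OF wf_H])
    have "x = \<psi> a" using xy(3) a(1) relabelling_inverse inj_relabelling by (metis injD)
    then have "y \<in> ballV H m" using xy(5) a(2) sub(2) by auto
    then have "b \<in> ballV G m" "y = \<psi> b" using xy(4) relabelling_ballV by auto
    then show "(a, b) \<in> edges G" using edges[OF a(1)] xy(5) \<open>x = \<psi> a\<close> by simp
  next
    assume ab: "(a, b) \<in> edges G"
    then have b: "b \<in> ballV G m" using assms(2) sub(1) by auto
    then have "\<psi> a \<in> verts H" "\<psi> b \<in> verts H" "(\<psi> a, \<psi> b) \<in> edges H"
      using a(1) ab edges \<psi>_in_ballV ballV_subset_verts[OF wf_H, of m] by auto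
    then show "(a, b) \<in> edges (relabel relabelling H)"
      using edges_relabel_iff[OF wf_H inj_on_subset[OF inj_relabelling subset_UNIV]]
        relabelling_inverse a(1) b by metis
  qed
qed

end

section \<open>From local to labelled convergence\<close>

definition close_ball_iso ::
    "nat \<Rightarrow> (nat \<Rightarrow> nat) \<Rightarrow> ('e::metric_space, 'v::metric_space) mgraph \<Rightarrow> ('e, 'v) mgraph \<Rightarrow> bool"
  where
  "close_ball_iso m \<psi> G H \<longleftrightarrow> ball_iso m \<psi> G H \<and>
     (\<forall>v \<in> ballV G m. dist (vmark H (\<psi> v)) (vmark G v) < inverse (real (Suc m))) \<and>
     (\<forall>a \<in> ballV G m. \<forall>b \<in> ballV G m. (a, b) \<in> edges G \<longrightarrow>
        dist (emark H (\<psi> a, \<psi> b)) (emark G (a, b)) < inverse (real (Suc m)))"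

lemma local_conv_eventually_close_ball_iso:
  fixes Hs :: "nat \<Rightarrow> ('e::metric_space, 'v::metric_space) mgraph"
  assumes lc: "local_conv Hs G" and wf: "wf_graph G"
  obtains \<Phi> where "\<And>m. eventually (\<lambda>n. close_ball_iso m (\<Phi> m n) G (Hs n)) sequentially"
proof -
  have "\<forall>m. \<exists>N \<Phi>. (\<forall>n > N. ball_iso m (\<Phi> n) G (Hs n)) \<and>
      (\<forall>v \<in> ballV G m. (\<lambda>n. vmark (Hs n) (\<Phi> n v)) \<longlonglongrightarrow> vmark G v) \<and>
      (\<forall>a \<in> ballV G m. \<forall>b \<in> ballV G m. (a, b) \<in> edges G \<longrightarrow>
         (\<lambda>n. emark (Hs n) (\<Phi> n a, \<Phi> n b)) \<longlonglongrightarrow> emark G (a, b))"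
    using lc unfolding local_conv_def .
  then obtain N \<Phi> where "\<And>m. (\<forall>n > N m. ball_iso m (\<Phi> m n) G (Hs n)) \<and>
      (\<forall>v \<in> ballV G m. (\<lambda>n. vmark (Hs n) (\<Phi> m n v)) \<longlonglongrightarrow> vmark G v) \<and>
      (\<forall>a \<in> ballV G m. \<forall>b \<in> ballV G m. (a, b) \<in> edges G \<longrightarrow>
         (\<lambda>n. emark (Hs n) (\<Phi> m n a, \<Phi> m n b)) \<longlonglongrightarrow> emark G (a, b))"
    by (auto simp only: choice_iff)
  then have N: "\<And>m. \<forall>n > N m. ball_iso m (\<Phi> m n) G (Hs n)"
    and V: "\<And>m. \<forall>v \<in> ballV G m. (\<lambda>n. vmark (Hs n) (\<Phi> m n v)) \<longlonglongrightarrow> vmark G v"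
    and E: "\<And>m. \<forall>a \<in> ballV G m. \<forall>b \<in> ballV G m. (a, b) \<in> edges G \<longrightarrow>
              (\<lambda>n. emark (Hs n) (\<Phi> m n a, \<Phi> m n b)) \<longlonglongrightarrow> emark G (a, b)"
    by blast+
  have tol: "inverse (real (Suc m)) > 0" for m by simp
  show ?thesis
  proof (rule that)
    fix m
    have "eventually (\<lambda>n. ball_iso m (\<Phi> m n) G (Hs n)) sequentially"
      using eventually_gt_at_top[of "N m"] by (rule eventually_mono) (use N in blast)
    moreover have "eventually (\<lambda>n. \<forall>v \<in> ballV G m.
        dist (vmark (Hs n) (\<Phi> m n v)) (vmark G v) < inverse (real (Suc m))) sequentially"
      using V[of m] tendstoD[OF _ tol] by (intro eventually_ball_finite finite_ballV[OF wf]) blast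
    moreover have "eventually (\<lambda>n. \<forall>a \<in> ballV G m. \<forall>b \<in> ballV G m. (a, b) \<in> edges G \<longrightarrow>
        dist (emark (Hs n) (\<Phi> m n a, \<Phi> m n b)) (emark G (a, b)) < inverse (real (Suc m))) sequentially"
    proof (intro eventually_ball_finite finite_ballV[OF wf] ballI)
      fix a b assume ab: "a \<in> ballV G m" "b \<in> ballV G m"
      show "eventually (\<lambda>n. (a, b) \<in> edges G \<longrightarrow>
          dist (emark (Hs n) (\<Phi> m n a, \<Phi> m n b)) (emark G (a, b)) < inverse (real (Suc m))) sequentially"
      proof (cases "(a, b) \<in> edges G")
        case True
        with E[of m] ab have "(\<lambda>n. emark (Hs n) (\<Phi> m n a, \<Phi> m n b)) \<longlonglongrightarrow> emark G (a, b)" by blast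
        from tendstoD[OF this tol[of m]] show ?thesis by (rule eventually_mono) simp
      qed simp
    qed
    ultimately show "eventually (\<lambda>n. close_ball_iso m (\<Phi> m n) G (Hs n)) sequentially"
      unfolding close_ball_iso_def by eventually_elim blast
  qed
qed

definition close_on_ball ::
    "nat \<Rightarrow> nat \<Rightarrow> ('e::metric_space, 'v::metric_space) mgraph \<Rightarrow> ('e, 'v) mgraph \<Rightarrow> bool" where
  "close_on_ball n m H G \<longleftrightarrow>
     verts H \<subseteq> ballV G m \<union> {n<..} \<and> ballV G m \<subseteq> verts H \<and> root H = root G \<and>
     (\<forall>k < m. \<forall>a \<in> ballV G k. \<forall>b. (a, b) \<in> edges H \<longleftrightarrow> (a, b) \<in> edges G) \<and>
     (\<forall>v \<in> ballV G m. dist (vmark H v) (vmark G v) < inverse (real (Suc m))) \<and>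
     (\<forall>a \<in> ballV G m. \<forall>b \<in> ballV G m. (a, b) \<in> edges G \<longrightarrow>
        dist (emark H (a, b)) (emark G (a, b)) < inverse (real (Suc m)))"

lemma close_on_ball_relabelling:
  fixes G H :: "('e::metric_space, 'v::metric_space) mgraph"
  assumes "wf_graph G" "wf_graph H" "close_ball_iso m \<psi> G H"
  shows "close_on_ball n m (relabel (ball_relabelling.relabelling G H m n \<psi>) H) G"
proof -
  have "ball_relabelling G H m \<psi>"
    using assms unfolding ball_relabelling_def close_ball_iso_def by blast
  then show ?thesis
    using assms(3) ball_relabelling.verts_relabel_subset ball_relabelling.ballV_subset_verts_relabel
      ball_relabelling.root_relabel ball_relabelling.edges_relabel_inner ball_relabelling.marks_relabel
    unfolding close_on_ball_def close_ball_iso_def by metis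
qed

lemma eventually_in_inner_ballV:
  assumes "connected_graph G" "filterlim r at_top sequentially" "v \<in> verts G"
  shows "eventually (\<lambda>n. \<exists>k < r n. v \<in> ballV G k) sequentially"
proof -
  obtain d where d: "v \<in> ballV G d"
    using assms(1,3) unfolding connected_graph_def compV_def by blast
  have "eventually (\<lambda>n. Suc d \<le> r n) sequentially"
    using assms(2) unfolding filterlim_at_top by blast
  then show ?thesis by (rule eventually_mono) (use d in \<open>blast dest: Suc_le_lessD\<close>)
qed

lemma hat_conv_if_close_on_balls:
  fixes Gs :: "nat \<Rightarrow> ('e::metric_space, 'v::metric_space) mgraph"
  assumes wfs: "\<And>n. wf_graph (Gs n)" and wf: "wf_graph G" and conn: "connected_graph G"
    and r: "filterlim r at_top sequentially"
    and close: "eventually (\<lambda>n. close_on_ball n (r n) (Gs n) G) sequentially"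
  shows "hat_conv Gs G"
proof -
  have in_ball: "eventually (\<lambda>n. v \<in> ballV G (r n)) sequentially" if "v \<in> verts G" for v
    using eventually_in_inner_ballV[OF conn r that]
    by (rule eventually_mono) (use ballV_mono less_imp_le in blast)
  have "eventually (\<lambda>n. x \<in> verts (Gs n) \<longleftrightarrow> x \<in> verts G) sequentially" for x
  proof (cases "x \<in> verts G")
    case True
    from close in_ball[OF True] show ?thesis
      by eventually_elim (auto simp: close_on_ball_def True)
  next
    case False
    with ballV_subset_verts[OF wf] have outside: "x \<notin> ballV G k" for k by blast
    from close eventually_ge_at_top[of x] show ?thesis
      by eventually_elim (use outside in \<open>auto simp: close_on_ball_def False\<close>)
  qed
  moreover have "eventually (\<lambda>n. \<forall>w. (u, w) \<in> edges (Gs n) \<longleftrightarrow> (u, w) \<in> edges G) sequentially"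
    if "u \<in> verts G" for u
    using close eventually_in_inner_ballV[OF conn r that]
  proof eventually_elim
    case (elim n)
    then obtain k where "k < r n" "u \<in> ballV G k" by blast
    with elim(1) show ?case unfolding close_on_ball_def by blast
  qed
  moreover have "eventually (\<lambda>n. root (Gs n) = root G) sequentially"
    using close by eventually_elim (simp add: close_on_ball_def)
  moreover have "(\<lambda>n. emark (Gs n) (a, b)) \<longlonglongrightarrow> emark G (a, b)" if ab: "(a, b) \<in> edges G" for a b
  proof (rule tendsto_if_dist_less_inverse_Suc[OF r])
    have "a \<in> verts G" "b \<in> verts G" using ab wf unfolding wf_graph_def by auto
    from close in_ball[OF this(1)] in_ball[OF this(2)]
    show "eventually (\<lambda>n. dist (emark (Gs n) (a, b)) (emark G (a, b)) < inverse (real (Suc (r n))))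
        sequentially"
      by eventually_elim (use ab in \<open>auto simp: close_on_ball_def\<close>)
  qed
  moreover have "(\<lambda>n. vmark (Gs n) v) \<longlonglongrightarrow> vmark G v" if "v \<in> verts G" for v
  proof (rule tendsto_if_dist_less_inverse_Suc[OF r])
    from close in_ball[OF that]
    show "eventually (\<lambda>n. dist (vmark (Gs n) v) (vmark G v) < inverse (real (Suc (r n)))) sequentially"
      by eventually_elim (auto simp: close_on_ball_def)
  qed
  ultimately show ?thesis
    unfolding hat_conv_iff_eventually[of Gs G, OF wfs wf] by auto
qed

lemma hat_conv_representatives_if_local_conv:
  fixes Hs :: "nat \<Rightarrow> ('e::metric_space, 'v::metric_space) mgraph"
  assumes wfs: "\<And>n. wf_graph (Hs n)" and wf_H: "wf_graph H"
    and lc: "local_conv (\<lambda>n. root_comp (Hs n)) (root_comp H)"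
    and wf: "wf_graph G" and conn: "connected_graph G" and iso: "mg_iso G (root_comp H)"
  shows "\<exists>Gs. (\<forall>n. wf_graph (Gs n) \<and> connected_graph (Gs n) \<and> mg_iso (Gs n) (root_comp (Hs n)))
    \<and> hat_conv Gs G"
proof -
  define Hn where "Hn = (\<lambda>n. root_comp (Hs n))"
  have wf_Hn: "wf_graph (Hn n)" and conn_Hn: "connected_graph (Hn n)" for n
    unfolding Hn_def using wf_root_comp[OF wfs] connected_root_comp by blast+
  have "local_conv Hn G"
    using local_conv_mg_iso[OF lc iso wf wf_root_comp[OF wf_H]] unfolding Hn_def .
  then obtain \<Phi> where "\<And>m. eventually (\<lambda>n. close_ball_iso m (\<Phi> m n) G (Hn n)) sequentially"
    using local_conv_eventually_close_ball_iso[OF _ wf] by blast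
  then obtain r where r: "filterlim r at_top sequentially"
    and close: "eventually (\<lambda>n. close_ball_iso (r n) (\<Phi> (r n) n) G (Hn n)) sequentially"
    by (rule eventually_diagonal)
  define \<rho> where "\<rho> n = (if ball_iso (r n) (\<Phi> (r n) n) G (Hn n)
      then ball_relabelling.relabelling G (Hn n) (r n) n (\<Phi> (r n) n) else id)" for n
  define Gs where "Gs n = relabel (\<rho> n) (Hn n)" for n
  have "inj_on (\<rho> n) (verts (Hn n))" for n
    using ball_relabelling.inj_relabelling[of G "Hn n"] wf wf_Hn
    by (auto simp: \<rho>_def ball_relabelling_def intro: inj_on_subset[OF _ subset_UNIV])
  then have "wf_graph (Gs n)" "connected_graph (Gs n)" "mg_iso (Gs n) (root_comp (Hs n))" for n
    unfolding Gs_def using wf_relabel[OF wf_Hn] connected_relabel[OF wf_Hn _ conn_Hn]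
      mg_iso_relabel[OF wf_Hn] by (simp_all add: Hn_def)
  moreover have "hat_conv Gs G"
    using \<open>\<And>n. wf_graph (Gs n)\<close> wf conn r
  proof (rule hat_conv_if_close_on_balls)
    from close show "eventually (\<lambda>n. close_on_ball n (r n) (Gs n) G) sequentially"
    proof eventually_elim
      case (elim n)
      then show ?case
        using close_on_ball_relabelling[OF wf wf_Hn elim] unfolding Gs_def \<rho>_def close_ball_iso_def by simp
    qed
  qed
  ultimately show ?thesis by blast
qed

theorem mainTheorem17:
  shows
  "(\<forall>(Gs :: nat \<Rightarrow> ('e::polish_space, 'v::polish_space) mgraph) G.
      (\<forall>n. wf_graph (Gs n)) \<and> wf_graph G \<and> hat_conv Gs G
        \<longrightarrow> local_conv (\<lambda>n. root_comp (Gs n)) (root_comp G))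
   \<and>
   (\<forall>(Hs :: nat \<Rightarrow> ('e, 'v) mgraph) H G.
      (\<forall>n. wf_graph (Hs n)) \<and> wf_graph H \<and>
      local_conv (\<lambda>n. root_comp (Hs n)) (root_comp H) \<and>
      wf_graph G \<and> connected_graph G \<and> mg_iso G (root_comp H)
        \<longrightarrow> (\<exists>Gs :: nat \<Rightarrow> ('e, 'v) mgraph.
               (\<forall>n. wf_graph (Gs n) \<and> connected_graph (Gs n) \<and> mg_iso (Gs n) (root_comp (Hs n)))
               \<and> hat_conv Gs G))"
proof (intro conjI allI impI; elim conjE)
  fix Gs :: "nat \<Rightarrow> ('e, 'v) mgraph" and G
  assume "\<forall>n. wf_graph (Gs n)" "wf_graph G" "hat_conv Gs G"
  then show "local_conv (\<lambda>n. root_comp (Gs n)) (root_comp G)"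
    by (intro local_conv_root_comp_if_hat_conv) blast+
next
  fix Hs :: "nat \<Rightarrow> ('e, 'v) mgraph" and H G
  assume "\<forall>n. wf_graph (Hs n)" "wf_graph H" "local_conv (\<lambda>n. root_comp (Hs n)) (root_comp H)"
    "wf_graph G" "connected_graph G" "mg_iso G (root_comp H)"
  then show "\<exists>Gs. (\<forall>n. wf_graph (Gs n) \<and> connected_graph (Gs n) \<and> mg_iso (Gs n) (root_comp (Hs n)))
      \<and> hat_conv Gs G"
    by (intro hat_conv_representatives_if_local_conv) blast+
qed

end
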